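(* Let $p,q\in\mathbb{N}$ with $q\ne0$, and suppose $x=p/q-1\in(-1,1)$ is regular for the sequence $n_j$ and $\lim_{j\to\infty}D_{n_j}(x)/n_j=L\in\overline{\mathbb{R}}$. Then $L$ is finite and $|L|=A(m^2/q^2)$ for some integer $m$ with $0\le m<q$. Moreover, there exists $j_0$ such that for all $j\ge j_0$, $(-1)^{\iota_{n_j}(x)}=\operatorname{sign}(L)$ and $|\rho_{n_j}(x)|=m/q$.
   Context: Nodes: $x_{k,n}:=2k/n-1$, $k=0,\dots,n$; $D_n(x)=\sum_{k=0}^n(-1)^k\frac{1}{x-x_{k,n}}$. $\iota_n(x):=\lfloor n(x+1)/2\rfloor$, $\rho_n(x):=n(x-x_{\iota_n(x),n})-1$. $A(y)=\sum_{k=0}^\infty(-1)^k\frac{4k+2}{(2k+1)^2-y}$ for $y\in[0,1)$. $\overline{\mathbb{R}}=\mathbb{R}\cup\{\pm\infty\}$ is the two-point compactification of $\mathbb{R}$. A sequence $n_j$ is a strictly increasing map $\mathbb{N}\to\mathbb{N}$; $x$ is regular for $n_j$ if there is $j_0$ with $x\notin\{x_{0,n_j},\dots,x_{n_j,n_j}\}$ for all $j\ge j_0$. *)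

theory Defs
  imports "HOL-Analysis.Analysis"
begin

definition node :: "nat \<Rightarrow> nat \<Rightarrow> real" where
  "node k n = 2 * real k / real n - 1"

definition D :: "nat \<Rightarrow> real \<Rightarrow> real" where
  "D n x = (\<Sum>k=0..n. (-1)^k * (1 / (x - node k n)))"

definition iota :: "nat \<Rightarrow> real \<Rightarrow> nat" where
  "iota n x = nat \<lfloor>real n * (x + 1) / 2\<rfloor>"

definition rho :: "nat \<Rightarrow> real \<Rightarrow> real" where
  "rho n x = real n * (x - node (iota n x) n) - 1"

definition A :: "real \<Rightarrow> real" where
  "A y = (\<Sum>k. (-1)^k * ((4 * real k + 2) / ((2 * real k + 1)^2 - y)))"

definition regular_for :: "real \<Rightarrow> (nat \<Rightarrow> nat) \<Rightarrow> bool" where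
  "regular_for x nj \<longleftrightarrow> (\<exists>j0. \<forall>j\<ge>j0. x \<notin> {node k (nj j) | k. k \<le> nj j})"

end

theory Submission
  imports Defs
begin

text \<open>Write \<open>n(x + 1)/2 = \<iota> + f\<close> with \<open>\<iota> = \<iota>\<^sub>n(x)\<close> and \<open>0 < f < 1\<close>, so that \<open>\<rho>\<^sub>n(x) = 2f - 1\<close>.
  Reversing the terms of \<open>D\<^sub>n(x)/n\<close> before the point and shifting those after it, \<open>D\<^sub>n(x)/n\<close>
  becomes \<open>(-1)\<^sup>\<iota>\<close> times two alternating sums of \<open>1/(2(f + j))\<close> and \<open>1/(2(1 - f + j))\<close>, which
  combine termwise into the Leibniz series of \<open>A(\<rho>\<^sup>2)\<close>, up to an error \<open>2/min(\<iota> + 1, n - \<iota>)\<close>.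
  For \<open>x = p/q - 1\<close> that minimum is at least \<open>n/(2q)\<close> and \<open>|\<rho>|\<close> is one of the values \<open>m/q\<close>
  with \<open>m < q\<close>. Hence along the subsequence \<open>D/n\<close> is shadowed by approximants
  \<open>(-1)\<^sup>\<iota> A(\<rho>\<^sup>2)\<close> from a finite set, which must eventually equal the limit \<open>L\<close>; as \<open>A\<close> is
  positive and strictly increasing on \<open>[0, 1)\<close>, this pins down \<open>sgn L\<close> and \<open>|\<rho>|\<close>.\<close>

subsection \<open>Alternating sums with decreasing terms\<close>

lemma sum_lessThan_add_nat:
  fixes g :: "nat \<Rightarrow> 'a::comm_monoid_add"
  shows "(\<Sum>i<M + K. g i) = (\<Sum>i<M. g i) + (\<Sum>i<K. g (M + i))"
  by (induction K) (simp_all add: add.assoc)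

lemma alternating_sum_bounds:
  fixes w :: "nat \<Rightarrow> real"
  assumes "\<And>i. 0 \<le> w i" and "\<And>i. w (Suc i) \<le> w i"
  shows "0 \<le> (\<Sum>i<K. (-1)^i * w i) \<and> (\<Sum>i<K. (-1)^i * w i) \<le> w 0"
  using assms
proof (induction K arbitrary: w)
  case 0
  then show ?case by simp
next
  case (Suc K)
  have IH: "0 \<le> (\<Sum>i<K. (-1)^i * w (Suc i)) \<and> (\<Sum>i<K. (-1)^i * w (Suc i)) \<le> w 1"
    using Suc.IH[of "\<lambda>i. w (Suc i)"] Suc.prems by auto
  have "(\<Sum>i<Suc K. (-1)^i * w i) = w 0 - (\<Sum>i<K. (-1)^i * w (Suc i))"
    by (subst sum.lessThan_Suc_shift) (simp add: sum_negf)
  then show ?case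
    using IH Suc.prems(1)[of 0] Suc.prems(2)[of 0] by auto
qed

lemma alternating_sum_diff_le:
  fixes w :: "nat \<Rightarrow> real"
  assumes "\<And>i. 0 \<le> w i" and "\<And>i. w (Suc i) \<le> w i" and "M \<le> N"
  shows "\<bar>(\<Sum>i<N. (-1)^i * w i) - (\<Sum>i<M. (-1)^i * w i)\<bar> \<le> w M"
proof -
  obtain K where N: "N = M + K"
    using \<open>M \<le> N\<close> le_Suc_ex by blast
  have "(\<Sum>i<N. (-1)^i * w i) - (\<Sum>i<M. (-1)^i * w i) = (-1)^M * (\<Sum>i<K. (-1)^i * w (M + i))"
    unfolding N sum_lessThan_add_nat by (simp add: sum_distrib_left power_add mult.assoc)
  moreover have "0 \<le> (\<Sum>i<K. (-1)^i * w (M + i)) \<and> (\<Sum>i<K. (-1)^i * w (M + i)) \<le> w M"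
    using alternating_sum_bounds[of "\<lambda>i. w (M + i)" K] assms by auto
  ultimately show ?thesis
    by (simp add: abs_mult power_abs)
qed

lemma alternating_suminf_diff_le:
  fixes w :: "nat \<Rightarrow> real"
  assumes "w \<longlonglongrightarrow> 0" and "\<And>i. 0 \<le> w i" and "\<And>i. w (Suc i) \<le> w i"
  shows "\<bar>(\<Sum>i. (-1)^i * w i) - (\<Sum>i<M. (-1)^i * w i)\<bar> \<le> w M"
proof -
  have "(\<lambda>N. \<bar>(\<Sum>i<N. (-1)^i * w i) - (\<Sum>i<M. (-1)^i * w i)\<bar>) \<longlonglongrightarrow>
      \<bar>(\<Sum>i. (-1)^i * w i) - (\<Sum>i<M. (-1)^i * w i)\<bar>"
    by (intro tendsto_intros summable_LIMSEQ summable_Leibniz'(1) assms)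
  moreover have "\<forall>N\<ge>M. \<bar>(\<Sum>i<N. (-1)^i * w i) - (\<Sum>i<M. (-1)^i * w i)\<bar> \<le> w M"
    using alternating_sum_diff_le assms(2,3) by blast
  ultimately show ?thesis
    using LIMSEQ_le_const2 by blast
qed

lemma alternating_suminf_pos:
  fixes w :: "nat \<Rightarrow> real"
  assumes "w \<longlonglongrightarrow> 0" and "\<And>i. 0 \<le> w i" and "\<And>i. w (Suc i) \<le> w i" and "w 1 < w 0"
  shows "0 < (\<Sum>i. (-1)^i * w i)"
  using summable_Leibniz'(2)[OF assms(1-3), of 1] assms(4) by (simp add: numeral_2_eq_2)

subsection \<open>The function \<open>A\<close>\<close>

definition A_term :: "real \<Rightarrow> nat \<Rightarrow> real" where
  "A_term y k = (4 * real k + 2) / ((2 * real k + 1)^2 - y)"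

lemma A_eq_suminf: "A y = (\<Sum>k. (-1)^k * A_term y k)"
  unfolding A_def A_term_def ..

lemma A_term_denominator_pos: "y < 1 \<Longrightarrow> 0 < (2 * real k + 1)^2 - y"
  using one_le_power[of "2 * real k + 1" 2] by linarith

lemma A_term_pos: "y < 1 \<Longrightarrow> 0 < A_term y k"
  unfolding A_term_def using A_term_denominator_pos[of y k] by simp

lemma A_term_decreasing:
  assumes "0 \<le> y" and "y < 1"
  shows "A_term y (Suc k) < A_term y k"
proof -
  define s where "s = 2 * real k + 1"
  have "0 < s^2 - y" and "0 < (s + 2)^2 - y"
    using A_term_denominator_pos[OF \<open>y < 1\<close>, of k] A_term_denominator_pos[OF \<open>y < 1\<close>, of "Suc k"]
    by (simp_all add: s_def algebra_simps)
  moreover have "2 * s * ((s + 2)^2 - y) - (2 * s + 4) * (s^2 - y) = 4 * s * (s + 2) + 4 * y"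
    by (simp add: algebra_simps power2_eq_square)
  moreover have "0 < s * (s + 2)"
    by (simp add: s_def)
  ultimately have "(2 * s + 4) / ((s + 2)^2 - y) < 2 * s / (s^2 - y)"
    using \<open>0 \<le> y\<close> by (simp add: divide_simps)
  moreover have "A_term y (Suc k) = (2 * s + 4) / ((s + 2)^2 - y)" and "A_term y k = 2 * s / (s^2 - y)"
    unfolding A_term_def s_def by (simp_all add: algebra_simps)
  ultimately show ?thesis
    by simp
qed

lemma A_term_le_inverse:
  assumes "y < 1" and "1 \<le> M"
  shows "A_term y M \<le> 1 / real M"
proof -
  have "(2 * real M + 1)^2 - y - (4 * real M + 2) * real M = 2 * real M + 1 - y"
    by (simp add: algebra_simps power2_eq_square)
  then have "(4 * real M + 2) * real M \<le> (2 * real M + 1)^2 - y"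
    using assms by linarith
  then show ?thesis
    unfolding A_term_def using A_term_denominator_pos[OF \<open>y < 1\<close>, of M] assms(2)
    by (simp add: divide_simps)
qed

lemma A_term_tendsto_0:
  assumes "y < 1"
  shows "A_term y \<longlonglongrightarrow> 0"
proof (rule tendsto_sandwich[of "\<lambda>_. 0" _ _ "\<lambda>k. 1 / real k"])
  show "\<forall>\<^sub>F k in sequentially. 0 \<le> A_term y k"
    using A_term_pos[OF assms] by (simp add: less_imp_le)
  show "\<forall>\<^sub>F k in sequentially. A_term y k \<le> 1 / real k"
    using A_term_le_inverse[OF assms] by (auto simp: eventually_sequentially)
qed (simp_all add: lim_inverse_n')

lemma summable_A:
  assumes "0 \<le> y" and "y < 1"
  shows "summable (\<lambda>k. (-1)^k * A_term y k)"
  using assms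
  by (intro summable_Leibniz'(1) A_term_tendsto_0 less_imp_le[OF A_term_pos] less_imp_le[OF A_term_decreasing])

lemma A_tail_le:
  assumes "0 \<le> y" and "y < 1"
  shows "\<bar>A y - (\<Sum>k<M. (-1)^k * A_term y k)\<bar> \<le> A_term y M"
  unfolding A_eq_suminf
  using assms
  by (intro alternating_suminf_diff_le A_term_tendsto_0 less_imp_le[OF A_term_pos]
      less_imp_le[OF A_term_decreasing])

lemma A_pos:
  assumes "0 \<le> y" and "y < 1"
  shows "0 < A y"
  using A_tail_le[OF assms, of 1] A_term_decreasing[OF assms, of 0] by simp

text \<open>\<open>A_term y k - A_term y' k\<close> is \<open>y - y'\<close> times the product of the positive decreasing
  sequences \<open>A_term y k\<close> and \<open>1 / ((2k + 1)\<^sup>2 - y')\<close>, so \<open>A y - A y'\<close> is again a Leibniz series.\<close>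

lemma A_strict_mono:
  assumes "0 \<le> y'" and "y' < y" and "y < 1"
  shows "A y' < A y"
proof -
  define w where "w k = A_term y k * (1 / ((2 * real k + 1)^2 - y'))" for k
  define h where "h k = A_term y k - A_term y' k" for k
  have den: "0 < (2 * real k + 1)^2 - y" "0 < (2 * real k + 1)^2 - y'" for k
    using A_term_denominator_pos assms by auto
  have h_eq: "h k = (y - y') * w k" for k
    unfolding h_def w_def A_term_def using den[of k] by (simp add: field_simps)
  have w_pos: "0 < w k" for k
    unfolding w_def using A_term_pos[of y k] den[of k] assms by simp
  have w_decreasing: "w (Suc k) < w k" for k
  proof -
    have "(2 * real k + 1)^2 \<le> (2 * real (Suc k) + 1)^2"
      by (intro power_mono) auto
    then have "1 / ((2 * real (Suc k) + 1)^2 - y') \<le> 1 / ((2 * real k + 1)^2 - y')"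
      using den[of k] den[of "Suc k"] by (intro divide_left_mono mult_pos_pos) auto
    then show ?thesis
      unfolding w_def using A_term_decreasing[of y k] A_term_pos[of y "Suc k"] den[of "Suc k"] assms
      by (intro mult_less_le_imp_less) auto
  qed
  have "A y - A y' = (\<Sum>k. (-1)^k * h k)"
    unfolding A_eq_suminf h_def
    using suminf_diff[OF summable_A[of y] summable_A[of y']] assms
    by (simp add: right_diff_distrib)
  moreover have "0 < (\<Sum>k. (-1)^k * h k)"
  proof (rule alternating_suminf_pos)
    show "h \<longlonglongrightarrow> 0"
      unfolding h_def using tendsto_diff[OF A_term_tendsto_0 A_term_tendsto_0] assms by simp
  qed (use h_eq w_pos w_decreasing assms in \<open>auto intro: less_imp_le\<close>)
  ultimately show ?thesis
    by simp
qed

lemma A_inj: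
  assumes "0 \<le> y" and "y < 1" and "0 \<le> y'" and "y' < 1" and "A y = A y'"
  shows "y = y'"
  using A_strict_mono[of y y'] A_strict_mono[of y' y] assms
  by (cases y y' rule: linorder_cases) auto

lemma sgn_abs_neg_one_power_mult_A:
  fixes r :: real
  assumes "\<bar>r\<bar> < 1"
  shows "sgn ((-1)^i * A (r^2)) = (-1)^i" and "\<bar>(-1)^i * A (r^2)\<bar> = A (r^2)"
  using A_pos[of "r^2"] assms by (simp_all add: sgn_mult abs_mult abs_square_less_1)

lemma neg_one_power_mult_A_inj:
  fixes r r' :: real
  assumes "\<bar>r\<bar> < 1" and "\<bar>r'\<bar> < 1" and "(-1)^i * A (r^2) = (-1)^i' * A (r'^2)"
  shows "\<bar>r\<bar> = \<bar>r'\<bar>"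
proof -
  have "A (r^2) = \<bar>(-1)^i * A (r^2)\<bar>"
    using sgn_abs_neg_one_power_mult_A(2)[OF assms(1)] by simp
  also have "\<dots> = \<bar>(-1)^i' * A (r'^2)\<bar>"
    by (simp only: assms(3))
  also have "\<dots> = A (r'^2)"
    by (fact sgn_abs_neg_one_power_mult_A(2)[OF assms(2)])
  finally have "r^2 = r'^2"
    by (rule A_inj[rotated 4]) (use assms(1,2) in \<open>simp_all add: abs_square_less_1\<close>)
  then show ?thesis
    using power2_eq_iff_nonneg[of "\<bar>r\<bar>" "\<bar>r'\<bar>"] by simp
qed

lemma neg_one_power_mult_A_mem_range:
  fixes r :: real
  assumes "m < q" and "\<bar>r\<bar> = real m / real q"
  shows "(-1)^i * A (r^2) \<in> (\<lambda>(c, m). c * A ((real m / real q)^2)) ` ({1, -1} \<times> {..<q})"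
proof -
  have "r^2 = (real m / real q)^2"
    using assms(2) by (metis power2_abs)
  moreover have "(-1::real)^i \<in> {1, -1}"
    by (cases "even i") auto
  ultimately show ?thesis
    using assms(1) by (intro image_eqI[of _ _ "((-1)^i, m)"]) auto
qed

subsection \<open>The position of \<open>x\<close> relative to the nodes\<close>

lemma iota_eq_floor:
  assumes "-1 \<le> x"
  shows "real (iota n x) = of_int \<lfloor>real n * (x + 1) / 2\<rfloor>"
  unfolding iota_def using assms by simp

lemma rho_eq:
  assumes "0 < n"
  shows "rho n x = 2 * (real n * (x + 1) / 2 - real (iota n x)) - 1"
  unfolding rho_def node_def using assms by (simp add: field_simps)

lemma iota_bounds:
  assumes "0 < n" and "-1 < x" and "x < 1" and "\<forall>k\<le>n. x \<noteq> node k n"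
  shows "iota n x < n"
    and "real (iota n x) < real n * (x + 1) / 2"
    and "real n * (x + 1) / 2 < real (iota n x) + 1"
proof -
  define t where "t = real n * (x + 1) / 2"
  have floor: "real (iota n x) \<le> t" "t < real (iota n x) + 1"
    using iota_eq_floor[of x n] assms(2) unfolding t_def by linarith+
  moreover have "t < real n"
    unfolding t_def using assms(1,3) by simp
  ultimately show "iota n x < n"
    by linarith
  moreover have "x = node (iota n x) n" if "real (iota n x) = t"
    using that assms(1) unfolding t_def node_def by (simp add: field_simps)
  ultimately show "real (iota n x) < t"
    using floor(1) assms(4) by fastforce
  show "t < real (iota n x) + 1"
    by (fact floor(2))
qed

lemma abs_rho_less_one:
  assumes "0 < n" and "-1 < x" and "x < 1" and "\<forall>k\<le>n. x \<noteq> node k n"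
  shows "\<bar>rho n x\<bar> < 1"
  using rho_eq[OF assms(1), of x] iota_bounds[OF assms] by simp

lemma rational_point_iota_bounds:
  assumes "q \<noteq> 0" and "x = real p / real q - 1" and "-1 < x" and "x < 1"
  shows "real n / (2 * real q) \<le> real (min (iota n x + 1) (n - iota n x))"
proof -
  define t where "t = real n * (x + 1) / 2"
  have q: "0 < real q"
    using assms(1) by simp
  have floor: "real (iota n x) \<le> t" "t < real (iota n x) + 1"
    using iota_eq_floor[of x n] assms(3) unfolding t_def by linarith+
  have "real p = real q * (x + 1)"
    using assms(2) q by (simp add: field_simps)
  then have "0 < real p" and "real p < 2 * real q"
    using assms(3,4) q by (simp_all add: mult_pos_pos)
  then have "1 \<le> p" and "p + 1 \<le> 2 * q"
    by linarith+
  then have "real n * 1 \<le> real n * real p" and "real n * 1 \<le> real n * (2 * real q - real p)"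
    by (intro mult_left_mono; simp)+
  moreover have "t = real n * real p / (2 * real q)"
    and "real n - t = real n * (2 * real q - real p) / (2 * real q)"
    unfolding t_def assms(2) using q by (simp_all add: field_simps)
  ultimately have "real n / (2 * real q) \<le> t" and "real n / (2 * real q) \<le> real n - t"
    using q by (simp_all add: divide_right_mono)
  then show ?thesis
    using floor by (auto simp: of_nat_diff)
qed

lemma abs_rho_rational:
  assumes "q \<noteq> 0" and "x = real p / real q - 1"
    and "0 < n" and "-1 < x" and "x < 1" and "\<forall>k\<le>n. x \<noteq> node k n"
  shows "\<exists>m<q. \<bar>rho n x\<bar> = real m / real q"
proof -
  define r where "r = int (n * p) - int q * (2 * int (iota n x) + 1)"
  have q: "0 < real q"
    using assms(1) by simp
  have "rho n x = real_of_int r / real q"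
    unfolding rho_eq[OF assms(3)] r_def assms(2) using q by (simp add: field_simps)
  then have rho: "\<bar>rho n x\<bar> = real (nat \<bar>r\<bar>) / real q"
    using q by simp
  moreover have "nat \<bar>r\<bar> < q"
    using abs_rho_less_one[OF assms(3-6)] q unfolding rho by (simp add: divide_less_eq)
  ultimately show ?thesis
    by blast
qed

subsection \<open>Approximation of \<open>D n x / n\<close> by \<open>A\<close>\<close>

lemma D_div_eq_sum:
  assumes "0 < n"
  shows "D n x / real n = (\<Sum>k\<le>n. (-1)^k / (2 * (real n * (x + 1) / 2 - real k)))"
proof -
  have "(-1)^k * (1 / (x - node k n)) / real n = (-1)^k / (2 * (real n * (x + 1) / 2 - real k))"
    for k
  proof -
    have "real n * (x - node k n) = 2 * (real n * (x + 1) / 2 - real k)"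
      unfolding node_def using assms by (simp add: field_simps)
    then show ?thesis
      by (simp add: mult.commute)
  qed
  then show ?thesis
    unfolding D_def sum_divide_distrib atLeast0AtMost by simp
qed

lemma neg_one_power_diff:
  assumes "j \<le> i"
  shows "(-1::'a::comm_ring_1)^(i - j) = (-1)^i * (-1)^j"
proof -
  obtain d where "i = j + d"
    using assms le_Suc_ex by blast
  then show ?thesis
    by (simp add: power_add ac_simps)
qed

text \<open>No hypothesis on \<open>f\<close> is needed: where a denominator vanishes, \<open>x / 0 = 0\<close> makes the
  corresponding terms on both sides vanish together.\<close>

lemma alternating_reciprocal_sum_split:
  fixes f :: real
  assumes "i \<le> n"
  shows "(\<Sum>k\<le>n. (-1)^k / (2 * (real i + f - real k))) =
    (-1)^i * ((\<Sum>j<i + 1. (-1)^j / (2 * (f + real j))) +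
              (\<Sum>j<n - i. (-1)^j / (2 * (1 - f + real j))))"
proof -
  define g where "g k = (-1::real)^k / (2 * (real i + f - real k))" for k
  have shifted: "g (i + 1 + j) = (-1)^i * ((-1)^j / (2 * (1 - f + real j)))" for j
  proof -
    define c where "c = 2 * (1 - f + real j)"
    have "2 * (real i + f - real (i + 1 + j)) = - c"
      unfolding c_def by simp
    then have "g (i + 1 + j) = (-1)^(i + 1 + j) / - c"
      unfolding g_def by (simp only:)
    then show ?thesis
      unfolding c_def[symmetric] by (simp add: power_add)
  qed
  have "Suc n = (i + 1) + (n - i)"
    using assms by simp
  then have "(\<Sum>k\<le>n. g k) = (\<Sum>k<i + 1. g k) + (\<Sum>j<n - i. g (i + 1 + j))"
    by (simp only: lessThan_Suc_atMost[symmetric] sum_lessThan_add_nat)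
  also have "(\<Sum>k<i + 1. g k) = (\<Sum>j<i + 1. g (i + 1 - Suc j))"
    by (rule sum.nat_diff_reindex[symmetric])
  also have "\<dots> = (\<Sum>j<i + 1. (-1)^i * ((-1)^j / (2 * (f + real j))))"
    by (intro sum.cong) (auto simp: g_def neg_one_power_diff of_nat_diff)
  also have "(\<Sum>j<n - i. g (i + 1 + j)) = (\<Sum>j<n - i. (-1)^i * ((-1)^j / (2 * (1 - f + real j))))"
    by (simp only: shifted)
  finally show ?thesis
    by (simp only: g_def sum_distrib_left distrib_left)
qed

lemma alternating_reciprocal_pair_approx_A:
  fixes f :: real
  assumes "0 < f" and "f < 1" and "1 \<le> M" and "M \<le> N1" and "M \<le> N2"
  shows "\<bar>(\<Sum>j<N1. (-1)^j / (2 * (f + real j))) + (\<Sum>j<N2. (-1)^j / (2 * (1 - f + real j)))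
           - A ((2 * f - 1)^2)\<bar> \<le> 2 / real M"
proof -
  define u where "u j = 1 / (2 * (f + real j))" for j
  define v where "v j = 1 / (2 * (1 - f + real j))" for j
  define y where "y = (2 * f - 1)^2"
  have y: "0 \<le> y" "y < 1"
    unfolding y_def using assms(1,2) by (auto simp: abs_square_less_1)
  have u: "0 \<le> u j" "u (Suc j) \<le> u j" and v: "0 \<le> v j" "v (Suc j) \<le> v j" for j
    unfolding u_def v_def using assms(1,2) by (auto simp: divide_simps)
  have "u M \<le> 1 / (2 * real M)" and "v M \<le> 1 / (2 * real M)"
    unfolding u_def v_def using assms(1-3) by (simp_all add: frac_le)
  moreover have "A_term y M \<le> 1 / real M"
    using A_term_le_inverse y assms(3) by simp
  moreover have "u j + v j = A_term y j" for j
  proof -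
    have "(2 * real j + 1)^2 - y = 4 * (f + real j) * (1 - f + real j)"
      unfolding y_def by (simp add: algebra_simps power2_eq_square)
    then show ?thesis
      unfolding A_term_def u_def v_def using assms(1,2) by (simp add: field_simps)
  qed
  then have "(\<Sum>j<M. (-1)^j * A_term y j) = (\<Sum>j<M. (-1)^j * u j) + (\<Sum>j<M. (-1)^j * v j)"
    by (simp add: sum.distrib distrib_left flip: \<open>u _ + v _ = A_term y _\<close>)
  moreover have "\<bar>(\<Sum>j<N1. (-1)^j * u j) - (\<Sum>j<M. (-1)^j * u j)\<bar> \<le> u M"
    and "\<bar>(\<Sum>j<N2. (-1)^j * v j) - (\<Sum>j<M. (-1)^j * v j)\<bar> \<le> v M"
    using alternating_sum_diff_le[of u M N1] alternating_sum_diff_le[of v M N2] u v assms(4,5)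
    by auto
  moreover have "\<bar>A y - (\<Sum>j<M. (-1)^j * A_term y j)\<bar> \<le> A_term y M"
    using A_tail_le[OF y] .
  ultimately show ?thesis
    unfolding y_def[symmetric] by (simp add: u_def v_def abs_le_iff)
qed

lemma D_div_approx_A:
  assumes "0 < n" and "-1 < x" and "x < 1" and "\<forall>k\<le>n. x \<noteq> node k n"
  shows "\<bar>D n x / real n - (-1)^iota n x * A (rho n x ^ 2)\<bar>
           \<le> 2 / real (min (iota n x + 1) (n - iota n x))"
proof -
  define i where "i = iota n x"
  define f where "f = real n * (x + 1) / 2 - real i"
  have f: "0 < f" "f < 1" and "i < n"
    using iota_bounds[OF assms] unfolding f_def i_def by auto
  have "D n x / real n = (-1)^i * ((\<Sum>j<i + 1. (-1)^j / (2 * (f + real j))) +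
                                   (\<Sum>j<n - i. (-1)^j / (2 * (1 - f + real j))))"
    using D_div_eq_sum[OF assms(1), of x] alternating_reciprocal_sum_split[of i n f] \<open>i < n\<close>
    by (simp add: f_def)
  moreover have "rho n x = 2 * f - 1"
    unfolding rho_eq[OF assms(1)] f_def i_def ..
  moreover have "\<bar>(-1::real)^i\<bar> = 1"
    by simp
  ultimately have "\<bar>D n x / real n - (-1)^i * A (rho n x ^ 2)\<bar> =
      \<bar>(\<Sum>j<i + 1. (-1)^j / (2 * (f + real j))) + (\<Sum>j<n - i. (-1)^j / (2 * (1 - f + real j)))
        - A ((2 * f - 1)^2)\<bar>"
    by (simp add: right_diff_distrib[symmetric] abs_mult)
  also have "\<dots> \<le> 2 / real (min (i + 1) (n - i))"
    using \<open>i < n\<close> by (intro alternating_reciprocal_pair_approx_A f) auto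
  finally show ?thesis
    unfolding i_def .
qed

lemma D_div_approx_A_rational:
  assumes "q \<noteq> 0" and "x = real p / real q - 1"
    and "0 < n" and "-1 < x" and "x < 1" and "\<forall>k\<le>n. x \<noteq> node k n"
  shows "\<bar>D n x / real n - (-1)^iota n x * A (rho n x ^ 2)\<bar> \<le> 4 * real q / real n"
proof -
  have "0 < real n / (2 * real q)"
    using assms(1,3) by simp
  then have "2 / real (min (iota n x + 1) (n - iota n x)) \<le> 2 / (real n / (2 * real q))"
    using rational_point_iota_bounds[OF assms(1,2,4,5)] by (intro frac_le) auto
  then show ?thesis
    using D_div_approx_A[OF assms(3-6)] by simp
qed

subsection \<open>Limits along the subsequence\<close>

lemma eventually_eq_limit_of_finite_range:
  fixes b :: "'a \<Rightarrow> 'b::t1_space"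
  assumes "finite V" and "\<forall>\<^sub>F j in F. b j \<in> V" and "(b \<longlongrightarrow> l) F"
  shows "\<forall>\<^sub>F j in F. b j = l"
proof -
  have "\<forall>\<^sub>F j in F. \<forall>v\<in>V - {l}. b j \<noteq> v"
    using assms(1,3) by (intro eventually_ball_finite) (auto intro: tendsto_imp_eventually_ne)
  with assms(2) show ?thesis
    by eventually_elim blast
qed

lemma ereal_tendsto_approx_by_finite_range:
  fixes f b :: "nat \<Rightarrow> real"
  assumes "finite V" and "\<forall>\<^sub>F j in sequentially. b j \<in> V"
    and "(\<lambda>j. f j - b j) \<longlonglongrightarrow> 0" and "((\<lambda>j. ereal (f j)) \<longlongrightarrow> L) sequentially"
  shows "\<exists>l. L = ereal l \<and> (\<forall>\<^sub>F j in sequentially. b j = l)"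
proof -
  define c where "c = Max (abs ` V) + 1"
  have "\<forall>\<^sub>F j in sequentially. \<bar>f j - b j\<bar> < 1"
    using tendstoD[OF assms(3), of 1] by (simp add: dist_real_def)
  with assms(2) have "\<forall>\<^sub>F j in sequentially. \<bar>f j\<bar> \<le> c"
  proof eventually_elim
    case (elim j)
    then have "\<bar>b j\<bar> \<le> Max (abs ` V)"
      using assms(1) by (intro Max_ge) auto
    with elim show ?case
      unfolding c_def by linarith
  qed
  then have "L \<le> ereal c" and "ereal (- c) \<le> L"
    by (auto intro!: tendsto_upperbound[OF assms(4)] tendsto_lowerbound[OF assms(4)]
        elim!: eventually_mono)
  then obtain l where L: "L = ereal l"
    by (cases L) auto
  then have "(\<lambda>j. f j - (f j - b j)) \<longlonglongrightarrow> l - 0"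
    using assms(3,4) by (intro tendsto_diff) simp_all
  then have "b \<longlonglongrightarrow> l"
    by simp
  with assms(1,2) show ?thesis
    using L eventually_eq_limit_of_finite_range by blast
qed

lemma regular_for_eventually:
  assumes "strict_mono nj" and "regular_for x nj"
  shows "\<forall>\<^sub>F j in sequentially. 0 < nj j \<and> (\<forall>k\<le>nj j. x \<noteq> node k (nj j))"
proof -
  obtain j0 where "\<forall>j\<ge>j0. x \<notin> {node k (nj j) | k. k \<le> nj j}"
    using assms(2) unfolding regular_for_def by blast
  moreover have "0 < nj j" if "1 \<le> j" for j
    using seq_suble[OF assms(1), of j] that by simp
  ultimately show ?thesis
    unfolding eventually_sequentially by (intro exI[of _ "max j0 1"]) auto
qed

lemma D_div_approx_A_tendsto_0:
  assumes "q \<noteq> 0" and "x = real p / real q - 1" and "-1 < x" and "x < 1"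
    and "strict_mono nj" and "regular_for x nj"
  shows "(\<lambda>j. D (nj j) x / real (nj j) - (-1)^iota (nj j) x * A (rho (nj j) x ^ 2)) \<longlonglongrightarrow> 0"
proof (rule Lim_null_comparison)
  show "\<forall>\<^sub>F j in sequentially. norm (D (nj j) x / real (nj j) - (-1)^iota (nj j) x * A (rho (nj j) x ^ 2))
          \<le> 4 * real q / real (nj j)"
    using regular_for_eventually[OF assms(5,6)]
    by eventually_elim (simp add: D_div_approx_A_rational[OF assms(1,2) _ assms(3,4)])
  show "(\<lambda>j. 4 * real q / real (nj j)) \<longlonglongrightarrow> 0"
    using LIMSEQ_subseq_LIMSEQ[OF lim_const_over_n assms(5)] by (simp add: comp_def)
qed

lemma eventually_const_neg_one_power_mult_A:
  fixes r :: "nat \<Rightarrow> real" and i :: "nat \<Rightarrow> nat"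
  assumes "\<forall>\<^sub>F j in sequentially. (-1)^i j * A (r j ^ 2) = l \<and> (\<exists>m<q. \<bar>r j\<bar> = real m / real q)"
  shows "\<exists>m<q. \<bar>l\<bar> = A ((real m / real q)^2) \<and>
    (\<exists>j0. \<forall>j\<ge>j0. (-1)^i j = sgn l \<and> \<bar>r j\<bar> = real m / real q)"
proof -
  obtain j0 where j0: "\<And>j. j0 \<le> j \<Longrightarrow> (-1)^i j * A (r j ^ 2) = l \<and> (\<exists>m<q. \<bar>r j\<bar> = real m / real q)"
    using assms unfolding eventually_sequentially by blast
  then obtain m where "m < q" and m: "\<bar>r j0\<bar> = real m / real q"
    by blast
  have r_less_one: "\<bar>r j\<bar> < 1" if "j0 \<le> j" for j
    using j0[OF that] by (auto simp: divide_less_eq)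
  have "(-1)^i j = sgn l \<and> \<bar>r j\<bar> = real m / real q" if "j0 \<le> j" for j
  proof
    show "(-1)^i j = sgn l"
      using j0[OF that] sgn_abs_neg_one_power_mult_A(1)[OF r_less_one[OF that], of "i j"] by simp
    have "\<bar>r j\<bar> = \<bar>r j0\<bar>"
      using j0[OF that] j0[OF order.refl] r_less_one[OF that] r_less_one[OF order.refl]
      by (intro neg_one_power_mult_A_inj[where i = "i j" and i' = "i j0"]) auto
    with m show "\<bar>r j\<bar> = real m / real q"
      by simp
  qed
  moreover have "\<bar>l\<bar> = A ((real m / real q)^2)"
    using j0[OF order.refl] sgn_abs_neg_one_power_mult_A(2)[OF r_less_one[OF order.refl]] m
    by (metis power2_abs)
  ultimately show ?thesis
    using \<open>m < q\<close> by blast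
qed

theorem lemma8:
  fixes p q :: nat and x :: real and nj :: "nat \<Rightarrow> nat" and L :: ereal
  assumes "q \<noteq> 0"
    and "x = real p / real q - 1"
    and "x \<in> {-1<..<1}"
    and "strict_mono nj"
    and "regular_for x nj"
    and "((\<lambda>j. ereal (D (nj j) x / real (nj j))) \<longlongrightarrow> L) sequentially"
  shows "\<bar>L\<bar> \<noteq> \<infinity> \<and>
    (\<exists>m::nat. m < q \<and> \<bar>real_of_ereal L\<bar> = A (real m ^ 2 / real q ^ 2) \<and>
      (\<exists>j0. \<forall>j\<ge>j0. (-1::real) ^ iota (nj j) x = sgn (real_of_ereal L) \<and>
                      \<bar>rho (nj j) x\<bar> = real m / real q))"
proof -
  have x: "-1 < x" "x < 1"
    using assms(3) by auto
  define b where "b j = (-1::real) ^ iota (nj j) x * A (rho (nj j) x ^ 2)" for j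
  define V where "V = (\<lambda>(c, m). c * A ((real m / real q)^2)) ` ({1, -1} \<times> {..<q})"
  have rational: "\<forall>\<^sub>F j in sequentially. \<exists>m<q. \<bar>rho (nj j) x\<bar> = real m / real q"
    using regular_for_eventually[OF assms(4,5)]
    by eventually_elim (blast intro: abs_rho_rational[OF assms(1,2) _ x])
  have "finite V"
    unfolding V_def by simp
  moreover from rational have "\<forall>\<^sub>F j in sequentially. b j \<in> V"
    by eventually_elim (auto simp: b_def V_def intro: neg_one_power_mult_A_mem_range)
  moreover have "(\<lambda>j. D (nj j) x / real (nj j) - b j) \<longlonglongrightarrow> 0"
    unfolding b_def by (rule D_div_approx_A_tendsto_0[OF assms(1,2) x assms(4,5)])
  ultimately have "\<exists>l. L = ereal l \<and> (\<forall>\<^sub>F j in sequentially. b j = l)"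
    by (rule ereal_tendsto_approx_by_finite_range[OF _ _ _ assms(6)])
  then obtain l where L: "L = ereal l" and "\<forall>\<^sub>F j in sequentially. b j = l"
    by blast
  with rational have "\<forall>\<^sub>F j in sequentially. (-1) ^ iota (nj j) x * A (rho (nj j) x ^ 2) = l \<and>
      (\<exists>m<q. \<bar>rho (nj j) x\<bar> = real m / real q)"
    unfolding b_def by (simp add: eventually_conj)
  then have "\<exists>m<q. \<bar>l\<bar> = A ((real m / real q)^2) \<and>
      (\<exists>j0. \<forall>j\<ge>j0. (-1) ^ iota (nj j) x = sgn l \<and> \<bar>rho (nj j) x\<bar> = real m / real q)"
    by (rule eventually_const_neg_one_power_mult_A)
  then show ?thesis
    using L by (simp add: power_divide)
qed

end
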